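(* Let $\psi,\phi\in \mathbf{\Psi}_n$ and $m:=\min_{t\in\Omega_n}\frac{\psi(t)}{\phi(t)}$, $M:=\max_{t\in\Omega_n}\frac{\psi(t)}{\phi(t)}$. Then: (i) $\frac{m^2}{M^2}\cdot C_{\rm NJ}(|\!|\!|\cdot|\!|\!|_\phi) \le C_{\rm NJ}(|\!|\!|\cdot|\!|\!|_\psi)\le \frac{M^2}{m^2}\cdot C_{\rm NJ}(|\!|\!|\cdot|\!|\!|_\phi)$; (ii) $\frac{m^2}{M^2}\cdot C_{\rm NJ}(|\!|\!|\cdot|\!|\!|_{\phi^*}) \le C_{\rm NJ}(|\!|\!|\cdot|\!|\!|_{\psi^*})\le\frac{M^2}{m^2}\cdot C_{\rm NJ}(|\!|\!|\cdot|\!|\!|_{\phi^*})$.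
   Context: Let $(X,\|\cdot\|)$ be a normed vector space, $n\ge2$. $\Omega_n:=\{t\in\mathbb{R}^n\mid t_i\ge0,\ \sum_i t_i=1\}$, $\Omega_n^\circ:=\{t\in\Omega_n\mid t_i<1\ \forall i\}$. $\mathbf{\Psi}_n$ is the class of convex continuous $\psi:\Omega_n\to\mathbb{R}$ with (B1) $\psi(\mathbf{e}_i)=1$ for all standard unit vectors $\mathbf{e}_i$ and (B2) $\psi(t)\ge(1-t_i)\psi\big(\frac{t_1}{1-t_i},\ldots,\frac{t_{i-1}}{1-t_i},0,\frac{t_{i+1}}{1-t_i},\ldots,\frac{t_n}{1-t_i}\big)$ for all $t\in\Omega_n^\circ$, $i=1,\ldots,n$. For $\psi\in\mathbf{\Psi}_n$, $|\!|\!|x|\!|\!|_\psi:=\big(\sum_{i}\|x_i\|\big)\,\psi\big(\frac{\|x_1\|}{\sum_{i}\|x_i\|},\ldots,\frac{\|x_n\|}{\sum_{i}\|x_i\|}\big)$ for $0\ne x\in X^n$, $|\!|\!|0|\!|\!|_\psi:=0$; $\psi^*(s):=\max_{t\in\Omega_n}\frac{\langle t,s\rangle}{\psi(t)}$ and $|\!|\!|\cdot|\!|\!|_{\psi^*}$ is the dual norm of $|\!|\!|\cdot|\!|\!|_\psi$ on $(X^n)^*$. For a norm $N$ on a vector space $Y$, the von Neumann–Jordan constant is $C_{\rm NJ}(N):=\sup\Big\{\frac{N(x+y)^2+N(x-y)^2}{2(N(x)^2+N(y)^2)}\ \Big|\ x,y\in Y,\ N(x)+N(y)>0\Big\}$.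 *)

theory Defs
  imports "HOL-Analysis.Analysis"
begin

text \<open>The simplex Omega_n, indexed by a finite type 'n (n = CARD('n)).\<close>
definition Omega :: "(real^'n) set" where
  "Omega = {t. (\<forall>i. 0 \<le> t$i) \<and> (\<Sum>i\<in>UNIV. t$i) = 1}"

definition Omega_int :: "(real^'n) set" where
  "Omega_int = {t \<in> Omega. \<forall>i. t$i < 1}"

definition PsiClass :: "(real^'n \<Rightarrow> real) set" where
  "PsiClass = {psi. convex_on Omega psi \<and> continuous_on Omega psi
      \<and> (\<forall>i. psi (axis i 1) = 1)
      \<and> (\<forall>t\<in>Omega_int. \<forall>i.
            psi t \<ge> (1 - t$i) * psi (\<chi> j. if j = i then 0 else t$j / (1 - t$i)))}"

definition psi_norm :: "(real^'n \<Rightarrow> real) \<Rightarrow> ('a::real_normed_vector)^'n \<Rightarrow> real" where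
  "psi_norm psi x =
     (if x = 0 then 0
      else (let s = (\<Sum>i\<in>UNIV. norm (x$i)) in s * psi (\<chi> i. norm (x$i) / s)))"

definition dual_psi_norm ::
  "(real^'n \<Rightarrow> real) \<Rightarrow> ((('a::real_normed_vector)^'n) \<Rightarrow>\<^sub>L real) \<Rightarrow> real" where
  "dual_psi_norm psi F = Sup {\<bar>blinfun_apply F x\<bar> | x. psi_norm psi x \<le> 1}"

definition cNJ :: "('v::real_vector \<Rightarrow> real) \<Rightarrow> real" where
  "cNJ N = Sup {((N (x + y))^2 + (N (x - y))^2) / (2 * ((N x)^2 + (N y)^2)) | x y.
                 N x + N y > 0}"

end

theory Submission
  imports Defs
begin

(* Since psi / phi is continuous and positive on the compact simplex, m phi <= psi <= M phi on
   Omega_n with 0 < m.  Positivity of a function in Psi_n follows from (B2): deleting a positive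
   coordinate t_i and renormalising gives a point of smaller support, so induction on the support
   ends at a vertex, where the value is 1.  The pointwise bounds give m N_phi <= N_psi <= M N_phi
   for the psi-norms and (1/M) N*_phi <= N*_psi <= (1/m) N*_phi for their duals.  If
   a N2 <= N1 <= b N2, each quotient defining C_NJ(N1) is at most (b/a)^2 times the quotient of N2
   at the same pair x, y, whence C_NJ(N1) <= (b/a)^2 C_NJ(N2), and symmetrically.  The suprema for
   the dual norms range over a nonempty set because X^n carries a nonzero bounded functional,
   obtained by Hahn-Banach (Zorn's lemma on graphs of norm-dominated partial functionals). *)

section \<open>Norm-dominated linear functionals\<close>

definition dominated_linear_graph :: "('a::real_normed_vector \<times> real) set \<Rightarrow> bool" where
  "dominated_linear_graph G \<longleftrightarrow> (0, 0) \<in> G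
     \<and> (\<forall>x a y b. (x, a) \<in> G \<longrightarrow> (y, b) \<in> G \<longrightarrow> (x + y, a + b) \<in> G)
     \<and> (\<forall>x a c. (x, a) \<in> G \<longrightarrow> (c *\<^sub>R x, c * a) \<in> G)
     \<and> (\<forall>x a b. (x, a) \<in> G \<longrightarrow> (x, b) \<in> G \<longrightarrow> a = b)
     \<and> (\<forall>x a. (x, a) \<in> G \<longrightarrow> a \<le> norm x)"

lemma dominated_linear_graphD:
  assumes "dominated_linear_graph G"
  shows dominated_linear_graph_zero: "(0, 0) \<in> G"
    and dominated_linear_graph_add: "(x, a) \<in> G \<Longrightarrow> (y, b) \<in> G \<Longrightarrow> (x + y, a + b) \<in> G"
    and dominated_linear_graph_scaleR: "(x, a) \<in> G \<Longrightarrow> (c *\<^sub>R x, c * a) \<in> G"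
    and dominated_linear_graph_unique: "(x, a) \<in> G \<Longrightarrow> (x, b) \<in> G \<Longrightarrow> a = b"
    and dominated_linear_graph_le_norm: "(x, a) \<in> G \<Longrightarrow> a \<le> norm x"
  using assms unfolding dominated_linear_graph_def by blast+

lemma dominated_linear_graph_line:
  fixes v :: "'a::real_normed_vector"
  assumes "v \<noteq> 0"
  shows "dominated_linear_graph (range (\<lambda>c. (c *\<^sub>R v, c * norm v)))"
  unfolding dominated_linear_graph_def
proof (intro conjI allI impI)
  show "(0, 0) \<in> range (\<lambda>c. (c *\<^sub>R v, c * norm v))"
    by (rule image_eqI[of _ _ 0]) auto
  show "(x + y, a + b) \<in> range (\<lambda>c. (c *\<^sub>R v, c * norm v))"
    if "(x, a) \<in> range (\<lambda>c. (c *\<^sub>R v, c * norm v))" "(y, b) \<in> range (\<lambda>c. (c *\<^sub>R v, c * norm v))"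
    for x a y b
    using that by (auto simp: image_iff scaleR_add_left[symmetric] distrib_right[symmetric])
  show "(c *\<^sub>R x, c * a) \<in> range (\<lambda>c. (c *\<^sub>R v, c * norm v))"
    if "(x, a) \<in> range (\<lambda>c. (c *\<^sub>R v, c * norm v))" for x a c
    using that by (auto simp: image_iff)
  show "a = b" if "(x, a) \<in> range (\<lambda>c. (c *\<^sub>R v, c * norm v))"
    "(x, b) \<in> range (\<lambda>c. (c *\<^sub>R v, c * norm v))" for x a b
    using that assms by (auto simp: scaleR_cancel_right)
  show "a \<le> norm x" if "(x, a) \<in> range (\<lambda>c. (c *\<^sub>R v, c * norm v))" for x a
    using that by clarsimp (metis abs_ge_self mult_right_mono norm_ge_zero)
qed

lemma dominated_linear_graph_extension_value:
  assumes G: "dominated_linear_graph G"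
  obtains \<xi> where "\<And>y a. (y, a) \<in> G \<Longrightarrow> a - norm (y - x\<^sub>0) \<le> \<xi> \<and> \<xi> \<le> norm (y + x\<^sub>0) - a"
proof -
  define L where "L = (\<lambda>(y, a). a - norm (y - x\<^sub>0)) ` G"
  have sandwich: "a - norm (y - x\<^sub>0) \<le> norm (z + x\<^sub>0) - b" if "(y, a) \<in> G" "(z, b) \<in> G" for y a z b
  proof -
    have "a + b \<le> norm ((y - x\<^sub>0) + (z + x\<^sub>0))"
      using dominated_linear_graph_le_norm[OF G dominated_linear_graph_add[OF G that]] by simp
    also have "\<dots> \<le> norm (y - x\<^sub>0) + norm (z + x\<^sub>0)" by (rule norm_triangle_ineq)
    finally show ?thesis by simp
  qed
  have "L \<noteq> {}" using dominated_linear_graph_zero[OF G] by (auto simp: L_def)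
  moreover have "bdd_above L"
  proof (rule bdd_aboveI)
    show "l \<le> norm (0 + x\<^sub>0) - 0" if "l \<in> L" for l
      using that sandwich[OF _ dominated_linear_graph_zero[OF G]] by (auto simp: L_def)
  qed
  ultimately have "a - norm (y - x\<^sub>0) \<le> Sup L \<and> Sup L \<le> norm (y + x\<^sub>0) - a" if "(y, a) \<in> G" for y a
    using that sandwich by (auto intro!: cSup_upper cSup_least simp: L_def)
  then show ?thesis using that by blast
qed

lemma dominated_linear_graph_extension_le_norm:
  assumes G: "dominated_linear_graph G" and "(y, a) \<in> G"
    and \<xi>: "\<And>y a. (y, a) \<in> G \<Longrightarrow> a - norm (y - x\<^sub>0) \<le> \<xi> \<and> \<xi> \<le> norm (y + x\<^sub>0) - a"
  shows "a + t * \<xi> \<le> norm (y + t *\<^sub>R x\<^sub>0)"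
proof (cases t "0 :: real" rule: linorder_cases)
  case less
  have "(- 1 / t) * a - norm ((- 1 / t) *\<^sub>R y - x\<^sub>0) \<le> \<xi>"
    using \<xi>[OF dominated_linear_graph_scaleR[OF G \<open>(y, a) \<in> G\<close>]] by blast
  then have "(- t) * ((- 1 / t) * a - norm ((- 1 / t) *\<^sub>R y - x\<^sub>0)) \<le> (- t) * \<xi>"
    using less by (intro mult_left_mono) auto
  moreover have "y + t *\<^sub>R x\<^sub>0 = (- t) *\<^sub>R ((- 1 / t) *\<^sub>R y - x\<^sub>0)"
    using less by (simp add: algebra_simps)
  then have "norm (y + t *\<^sub>R x\<^sub>0) = (- t) * norm ((- 1 / t) *\<^sub>R y - x\<^sub>0)"
    using less by simp
  ultimately show ?thesis using less by (simp add: algebra_simps)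
next
  case equal
  then show ?thesis using dominated_linear_graph_le_norm[OF G \<open>(y, a) \<in> G\<close>] by simp
next
  case greater
  have "\<xi> \<le> norm ((1 / t) *\<^sub>R y + x\<^sub>0) - (1 / t) * a"
    using \<xi>[OF dominated_linear_graph_scaleR[OF G \<open>(y, a) \<in> G\<close>, of "1 / t"]] by simp
  then have "t * \<xi> \<le> t * (norm ((1 / t) *\<^sub>R y + x\<^sub>0) - (1 / t) * a)"
    using greater by (intro mult_left_mono) auto
  moreover have "y + t *\<^sub>R x\<^sub>0 = t *\<^sub>R ((1 / t) *\<^sub>R y + x\<^sub>0)"
    using greater by (simp add: algebra_simps)
  then have "norm (y + t *\<^sub>R x\<^sub>0) = t * norm ((1 / t) *\<^sub>R y + x\<^sub>0)"
    using greater by simp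
  ultimately show ?thesis using greater by (simp add: algebra_simps)
qed

lemma dominated_linear_graph_coeff_unique:
  assumes G: "dominated_linear_graph G" and x\<^sub>0: "x\<^sub>0 \<notin> fst ` G"
    and "(y, a) \<in> G" "(z, b) \<in> G" "y + t *\<^sub>R x\<^sub>0 = z + u *\<^sub>R x\<^sub>0"
  shows "t = u"
proof (rule ccontr)
  assume "t \<noteq> u"
  have "(t - u) *\<^sub>R x\<^sub>0 = z + (- 1) *\<^sub>R y"
    using assms(5) by (simp add: algebra_simps)
  then have "x\<^sub>0 = (1 / (t - u)) *\<^sub>R (z + (- 1) *\<^sub>R y)"
    unfolding eq_vector_fraction_iff using \<open>t \<noteq> u\<close> by simp
  moreover have "((1 / (t - u)) *\<^sub>R (z + (- 1) *\<^sub>R y), (1 / (t - u)) * (b + (- 1) * a)) \<in> G"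
    using assms(3,4) by (intro dominated_linear_graph_scaleR[OF G] dominated_linear_graph_add[OF G])
  ultimately show False
    using x\<^sub>0 by force
qed

lemma dominated_linear_graph_extension:
  assumes G: "dominated_linear_graph G" and x\<^sub>0: "x\<^sub>0 \<notin> fst ` G"
    and \<xi>: "\<And>y a. (y, a) \<in> G \<Longrightarrow> a - norm (y - x\<^sub>0) \<le> \<xi> \<and> \<xi> \<le> norm (y + x\<^sub>0) - a"
  shows "dominated_linear_graph {(y + t *\<^sub>R x\<^sub>0, a + t * \<xi>) | y a t. (y, a) \<in> G}"
    (is "dominated_linear_graph ?G'")
  unfolding dominated_linear_graph_def
proof (intro conjI allI impI)
  have G'I: "(y + t *\<^sub>R x\<^sub>0, a + t * \<xi>) \<in> ?G'" if "(y, a) \<in> G" for y a t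
    using that by blast
  show "(0, 0) \<in> ?G'"
    using G'I[OF dominated_linear_graph_zero[OF G], of 0] by simp
  show "(x + y, a + b) \<in> ?G'" if mem: "(x, a) \<in> ?G'" "(y, b) \<in> ?G'" for x a y b
  proof -
    obtain x' a' t y' b' u where "x = x' + t *\<^sub>R x\<^sub>0" "a = a' + t * \<xi>" "(x', a') \<in> G"
      "y = y' + u *\<^sub>R x\<^sub>0" "b = b' + u * \<xi>" "(y', b') \<in> G"
      using mem by blast
    then show ?thesis
      using G'I[OF dominated_linear_graph_add[OF G], of x' a' y' b' "t + u"]
      by (simp add: algebra_simps)
  qed
  show "(c *\<^sub>R x, c * a) \<in> ?G'" if mem: "(x, a) \<in> ?G'" for x a c
  proof -
    obtain x' a' t where "x = x' + t *\<^sub>R x\<^sub>0" "a = a' + t * \<xi>" "(x', a') \<in> G"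
      using mem by blast
    then show ?thesis
      using G'I[OF dominated_linear_graph_scaleR[OF G], of x' a' c "c * t"]
      by (simp add: algebra_simps)
  qed
  show "a = b" if mem: "(x, a) \<in> ?G'" "(x, b) \<in> ?G'" for x a b
  proof -
    obtain x' a' t y' b' u where "x = x' + t *\<^sub>R x\<^sub>0" "a = a' + t * \<xi>" "(x', a') \<in> G"
      "x = y' + u *\<^sub>R x\<^sub>0" "b = b' + u * \<xi>" "(y', b') \<in> G"
      using mem by blast
    then show ?thesis
      using dominated_linear_graph_coeff_unique[OF G x\<^sub>0] dominated_linear_graph_unique[OF G]
      by (metis add_right_cancel)
  qed
  show "a \<le> norm x" if "(x, a) \<in> ?G'" for x a
    using that dominated_linear_graph_extension_le_norm[OF G _ \<xi>] by auto
qed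

lemma dominated_linear_graph_extend:
  assumes G: "dominated_linear_graph G" and x\<^sub>0: "x\<^sub>0 \<notin> fst ` G"
  obtains G' where "dominated_linear_graph G'" "G \<subset> G'"
proof -
  obtain \<xi> where \<xi>: "\<And>y a. (y, a) \<in> G \<Longrightarrow> a - norm (y - x\<^sub>0) \<le> \<xi> \<and> \<xi> \<le> norm (y + x\<^sub>0) - a"
    using dominated_linear_graph_extension_value[OF G] by blast
  let ?G' = "{(y + t *\<^sub>R x\<^sub>0, a + t * \<xi>) | y a t. (y, a) \<in> G}"
  have G'I: "(y + t *\<^sub>R x\<^sub>0, a + t * \<xi>) \<in> ?G'" if "(y, a) \<in> G" for y a t
    using that by blast
  have "G \<subseteq> ?G'"
    using G'I[where t = 0] by auto
  moreover have "(x\<^sub>0, \<xi>) \<in> ?G' - G"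
    using G'I[OF dominated_linear_graph_zero[OF G], of 1] x\<^sub>0 by force
  ultimately show ?thesis
    using that dominated_linear_graph_extension[OF G x\<^sub>0 \<xi>] by blast
qed

lemma dominated_linear_graph_Union_chain:
  assumes "C \<noteq> {}" and "\<And>G. G \<in> C \<Longrightarrow> dominated_linear_graph G"
    and chain: "\<And>G H. G \<in> C \<Longrightarrow> H \<in> C \<Longrightarrow> G \<subseteq> H \<or> H \<subseteq> G"
  shows "dominated_linear_graph (\<Union>C)"
proof -
  have common: "\<exists>G\<in>C. p \<in> G \<and> q \<in> G" if "p \<in> \<Union>C" "q \<in> \<Union>C" for p q
    using that chain by blast
  show ?thesis
    unfolding dominated_linear_graph_def
  proof (intro conjI allI impI)
    show "(0, 0) \<in> \<Union>C"
      using assms(1,2) dominated_linear_graph_zero by blast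
    show "(x + y, a + b) \<in> \<Union>C" if "(x, a) \<in> \<Union>C" "(y, b) \<in> \<Union>C" for x a y b
      using common[OF that] assms(2) dominated_linear_graph_add by blast
    show "(c *\<^sub>R x, c * a) \<in> \<Union>C" if "(x, a) \<in> \<Union>C" for x a c
      using that assms(2) dominated_linear_graph_scaleR by blast
    show "a = b" if "(x, a) \<in> \<Union>C" "(x, b) \<in> \<Union>C" for x a b
      using common[OF that] assms(2) dominated_linear_graph_unique by blast
    show "a \<le> norm x" if "(x, a) \<in> \<Union>C" for x a
      using that assms(2) dominated_linear_graph_le_norm by blast
  qed
qed

lemma bounded_linear_of_total_dominated_linear_graph:
  assumes G: "dominated_linear_graph G" and total: "\<And>x. \<exists>a. (x, a) \<in> G"
  shows "bounded_linear (\<lambda>x. THE a. (x, a) \<in> G)" (is "bounded_linear ?f")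
proof -
  have graph: "(x, ?f x) \<in> G" for x
    using total[of x] dominated_linear_graph_unique[OF G] by (metis theI)
  have the_eq: "?f x = a" if "(x, a) \<in> G" for x a
    using dominated_linear_graph_unique[OF G graph that] .
  show ?thesis
  proof (rule bounded_linear_intro[where K = 1])
    show "?f (x + y) = ?f x + ?f y" for x y
      by (rule the_eq[OF dominated_linear_graph_add[OF G graph graph]])
    show "?f (r *\<^sub>R x) = r *\<^sub>R ?f x" for r x
      using the_eq[OF dominated_linear_graph_scaleR[OF G graph]] by simp
    show "norm (?f x) \<le> norm x * 1" for x
      using dominated_linear_graph_le_norm[OF G graph, of x]
        dominated_linear_graph_le_norm[OF G dominated_linear_graph_scaleR[OF G graph[of x], of "- 1"]]
      by simp
  qed
qed

lemma exists_bounded_linear_functional_norm: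
  fixes v :: "'a::real_normed_vector"
  assumes "v \<noteq> 0"
  obtains f where "bounded_linear f" "f v = norm v"
proof -
  define A where "A = {G. dominated_linear_graph G \<and> (v, norm v) \<in> G}"
  have "\<exists>G\<in>A. \<forall>H\<in>A. G \<subseteq> H \<longrightarrow> H = G"
  proof (rule subset_Zorn_nonempty)
    show "A \<noteq> {}"
      using dominated_linear_graph_line[OF assms] by (force simp: A_def)
    show "\<Union>C \<in> A" if "C \<noteq> {}" "subset.chain A C" for C
      using that dominated_linear_graph_Union_chain[of C]
      unfolding A_def subset_chain_def by blast
  qed
  then obtain G where G: "dominated_linear_graph G" "(v, norm v) \<in> G"
    and maximal: "\<And>H. dominated_linear_graph H \<Longrightarrow> G \<subseteq> H \<Longrightarrow> (v, norm v) \<in> H \<Longrightarrow> H = G"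
    by (auto simp: A_def)
  have total: "\<exists>a. (x, a) \<in> G" for x
  proof (rule ccontr)
    assume "\<nexists>a. (x, a) \<in> G"
    then have "x \<notin> fst ` G" by force
    with G(1) obtain H where "dominated_linear_graph H" "G \<subset> H"
      by (rule dominated_linear_graph_extend)
    with maximal G(2) show False by blast
  qed
  show ?thesis
  proof
    show "bounded_linear (\<lambda>x. THE a. (x, a) \<in> G)"
      by (rule bounded_linear_of_total_dominated_linear_graph[OF G(1) total])
    show "(THE a. (v, a) \<in> G) = norm v"
      using G dominated_linear_graph_unique by blast
  qed
qed

lemma exists_nonzero_blinfun_vec:
  assumes "\<exists>x::'a::real_normed_vector. x \<noteq> 0"
  shows "\<exists>F :: (('a^'n) \<Rightarrow>\<^sub>L real). F \<noteq> 0"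
proof -
  obtain v :: 'a where "v \<noteq> 0"
    using assms by blast
  then obtain f where f: "bounded_linear f" "f v = norm v"
    by (rule exists_bounded_linear_functional_norm)
  fix i :: 'n
  have "bounded_linear (\<lambda>x::'a^'n. f (x $ i))"
    using bounded_linear_compose[OF f(1) bounded_linear_vec_nth] .
  then have "blinfun_apply (Blinfun (\<lambda>x::'a^'n. f (x $ i))) (vec v) = norm v"
    using f(2) by (simp add: bounded_linear_Blinfun_apply)
  then have "Blinfun (\<lambda>x::'a^'n. f (x $ i)) \<noteq> 0"
    using \<open>v \<noteq> 0\<close> by (intro notI) simp
  then show ?thesis
    by blast
qed

section \<open>The simplex and the class Psi\<close>

lemma Omega_iff: "t \<in> Omega \<longleftrightarrow> (\<forall>i. 0 \<le> t$i) \<and> (\<Sum>i\<in>UNIV. t$i) = 1"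
  by (simp add: Omega_def)

lemma Omega_component_le_1:
  assumes "t \<in> Omega"
  shows "t$i \<le> 1"
  using member_le_sum[of i UNIV "\<lambda>j. t$j"] assms by (simp add: Omega_iff)

lemma Omega_eq_axis:
  assumes "t \<in> Omega" and "t$i = 1"
  shows "t = axis i 1"
proof -
  have "(\<Sum>j\<in>UNIV - {i}. t$j) = 0"
    using assms sum.remove[of UNIV i "\<lambda>j. t$j"] by (simp add: Omega_iff)
  then have "t$j = 0" if "j \<noteq> i" for j
    using assms(1) that by (simp add: Omega_iff sum_nonneg_eq_0_iff)
  then show ?thesis
    using assms(2) by (auto simp: vec_eq_iff axis_def)
qed

lemma axis_in_Omega: "axis i 1 \<in> Omega"
  by (simp add: Omega_iff axis_def)

lemma compact_Omega: "compact Omega"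
proof -
  have "(Omega :: (real^'n) set) = {t. \<forall>i. 0 \<le> t$i} \<inter> {t. (\<Sum>i\<in>UNIV. t$i) = 1}"
    by (auto simp: Omega_iff)
  moreover have "closed {t::real^'n. \<forall>i. 0 \<le> t$i}" "closed {t::real^'n. (\<Sum>i\<in>UNIV. t$i) = 1}"
    by (intro closed_Collect_all closed_Collect_le closed_Collect_eq continuous_intros)+
  ultimately have "closed (Omega :: (real^'n) set)"
    by (metis closed_Int)
  moreover have "norm t \<le> 1" if "t \<in> Omega" for t :: "real^'n"
    using norm_le_l1_cart[of t] that by (simp add: Omega_iff)
  then have "bounded (Omega :: (real^'n) set)"
    by (auto simp: bounded_iff)
  ultimately show ?thesis
    by (simp add: compact_eq_bounded_closed)
qed

definition face_projection :: "'n \<Rightarrow> real^'n \<Rightarrow> real^'n" where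
  "face_projection i t = (\<chi> j. if j = i then 0 else t$j / (1 - t$i))"

lemma PsiClass_face_projection:
  assumes "psi \<in> PsiClass" and "t \<in> Omega_int"
  shows "(1 - t$i) * psi (face_projection i t) \<le> psi t"
  using assms by (simp add: PsiClass_def face_projection_def)

lemma face_projection_in_Omega:
  assumes "t \<in> Omega" and "t$i < 1"
  shows "face_projection i t \<in> Omega"
proof -
  have "(\<Sum>j\<in>UNIV. face_projection i t $ j) = (\<Sum>j\<in>UNIV - {i}. t$j) / (1 - t$i)"
    by (simp add: face_projection_def sum.remove[of UNIV i] sum_divide_distrib)
  also have "\<dots> = 1"
    using assms sum.remove[of UNIV i "\<lambda>j. t$j"] by (simp add: Omega_iff)
  finally show ?thesis
    using assms by (simp add: Omega_iff face_projection_def)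
qed

lemma Omega_intI:
  assumes "t \<in> Omega" and "0 < t$i" and "t$i < 1"
  shows "t \<in> Omega_int"
proof -
  have "t$k < 1" for k
  proof (cases "k = i")
    case False
    then have "t$k + t$i = (\<Sum>j\<in>{k, i}. t$j)"
      by simp
    also have "\<dots> \<le> (\<Sum>j\<in>UNIV. t$j)"
      using assms(1) by (intro sum_mono2) (auto simp: Omega_iff)
    finally show ?thesis
      using assms by (simp add: Omega_iff)
  qed (use assms in simp)
  then show ?thesis
    using assms(1) by (simp add: Omega_int_def)
qed

lemma Omega_support_nonempty:
  assumes "t \<in> Omega"
  shows "{j. t$j \<noteq> 0} \<noteq> {}"
proof
  assume "{j. t$j \<noteq> 0} = {}"
  then have "(\<Sum>j\<in>UNIV. t$j) = 0"
    by (auto intro: sum.neutral)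
  then show False
    using assms by (simp add: Omega_iff)
qed

lemma PsiClass_pos_if_face_projection_pos:
  assumes "psi \<in> PsiClass" and "t \<in> Omega" and "0 < t$i" and "t$i < 1"
    and "0 < psi (face_projection i t)"
  shows "0 < psi t"
proof -
  have "0 < (1 - t$i) * psi (face_projection i t)"
    using assms(4,5) by simp
  then show ?thesis
    using PsiClass_face_projection[OF assms(1) Omega_intI[OF assms(2-4)], of i] by linarith
qed

lemma PsiClass_pos:
  fixes psi :: "real^'n \<Rightarrow> real"
  assumes psi: "psi \<in> PsiClass" and "t \<in> Omega"
  shows "0 < psi t"
proof -
  have "\<forall>t\<in>Omega. {j. t$j \<noteq> 0} \<subseteq> S \<longrightarrow> 0 < psi t" if "finite S" for S
    using that
  proof (induction S)
    case empty
    then show ?case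
      using Omega_support_nonempty by blast
  next
    case (insert i S)
    show ?case
    proof (intro ballI impI)
      fix t assume t: "t \<in> Omega" and supp: "{j. t$j \<noteq> 0} \<subseteq> insert i S"
      have "0 \<le> t$i" "t$i \<le> 1"
        using t Omega_component_le_1[OF t] by (simp_all add: Omega_iff)
      show "0 < psi t"
      proof (cases "t$i = 0 \<or> t$i = 1")
        case True
        then show ?thesis
        proof
          assume "t$i = 0"
          then have "{j. t$j \<noteq> 0} \<subseteq> S"
            using supp by blast
          then show ?thesis
            using insert.IH t by blast
        next
          assume "t$i = 1"
          then have "t = axis i 1"
            by (rule Omega_eq_axis[OF t])
          then show ?thesis
            using psi by (simp add: PsiClass_def)
        qed
      next
        case False
        then have "0 < t$i" "t$i < 1"
          using \<open>0 \<le> t$i\<close> \<open>t$i \<le> 1\<close> by simp_all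
        moreover have "{j. face_projection i t $ j \<noteq> 0} \<subseteq> S"
          using supp by (auto simp: face_projection_def)
        ultimately show ?thesis
          using insert.IH face_projection_in_Omega[OF t] PsiClass_pos_if_face_projection_pos[OF psi t]
          by blast
      qed
    qed
  qed
  from this[of UNIV] show ?thesis
    using assms(2) by simp
qed

lemma continuous_pos_on_compact_Inf_Sup:
  fixes f :: "'a::topological_space \<Rightarrow> real"
  assumes "compact S" "S \<noteq> {}" "continuous_on S f" "\<And>t. t \<in> S \<Longrightarrow> 0 < f t"
  shows "0 < Inf (f ` S)" and "\<And>t. t \<in> S \<Longrightarrow> Inf (f ` S) \<le> f t \<and> f t \<le> Sup (f ` S)"
proof -
  have K: "compact (f ` S)"
    using assms(3,1) by (rule compact_continuous_image)
  then obtain s where "s \<in> S" and min: "\<And>t. t \<in> S \<Longrightarrow> f s \<le> f t"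
    using compact_attains_inf[OF K] assms(2) by blast
  then have "Inf (f ` S) = f s"
    by (intro cInf_eq_minimum) auto
  then show "0 < Inf (f ` S)"
    using assms(4) \<open>s \<in> S\<close> by simp
  show "Inf (f ` S) \<le> f t \<and> f t \<le> Sup (f ` S)" if "t \<in> S" for t
    using that \<open>Inf (f ` S) = f s\<close> min compact_imp_bounded[OF K]
    by (auto intro!: cSup_upper bounded_imp_bdd_above)
qed

lemma PsiClass_bounds:
  fixes psi :: "real^'n \<Rightarrow> real"
  assumes "psi \<in> PsiClass"
  obtains c C where "0 < c" "\<And>t. t \<in> Omega \<Longrightarrow> c \<le> psi t \<and> psi t \<le> C"
proof
  have "continuous_on Omega psi"
    using assms by (simp add: PsiClass_def)
  note bounds = continuous_pos_on_compact_Inf_Sup[OF compact_Omega _ this PsiClass_pos[OF assms]]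
  show "0 < Inf (psi ` Omega)"
    using bounds(1) axis_in_Omega by blast
  show "Inf (psi ` Omega) \<le> psi t \<and> psi t \<le> Sup (psi ` Omega)" if "t \<in> Omega" for t
    using bounds(2) that by blast
qed

lemma PsiClass_ratio_bounds:
  fixes psi phi :: "real^'n \<Rightarrow> real"
  assumes psi: "psi \<in> PsiClass" and phi: "phi \<in> PsiClass"
  defines "m \<equiv> Inf ((\<lambda>t. psi t / phi t) ` Omega)"
    and "M \<equiv> Sup ((\<lambda>t. psi t / phi t) ` Omega)"
  shows "0 < m" and "\<And>t. t \<in> Omega \<Longrightarrow> m * phi t \<le> psi t \<and> psi t \<le> M * phi t"
proof -
  have "\<forall>t\<in>Omega. phi t \<noteq> 0"
    using PsiClass_pos[OF phi] by force
  then have cont: "continuous_on Omega (\<lambda>t. psi t / phi t)"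
    using psi phi by (intro continuous_on_divide) (auto simp: PsiClass_def)
  have pos: "0 < psi t / phi t" if "t \<in> Omega" for t
    using PsiClass_pos[OF psi that] PsiClass_pos[OF phi that] by simp
  have "(Omega :: (real^'n) set) \<noteq> {}"
    using axis_in_Omega by blast
  note bounds =
    continuous_pos_on_compact_Inf_Sup[of Omega "\<lambda>t. psi t / phi t", OF compact_Omega this cont pos]
  show "0 < m"
    unfolding m_def by (rule bounds(1))
  fix t :: "real^'n" assume "t \<in> Omega"
  then have "m \<le> psi t / phi t" and "psi t / phi t \<le> M"
    unfolding m_def M_def using bounds(2) by blast+
  then show "m * phi t \<le> psi t \<and> psi t \<le> M * phi t"
    using PsiClass_pos[OF phi \<open>t \<in> Omega\<close>] by (simp add: pos_le_divide_eq pos_divide_le_eq)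
qed

section \<open>Psi-direct sum norms and their duals\<close>

definition l1_norm :: "('a::real_normed_vector)^'n \<Rightarrow> real" where
  "l1_norm x = (\<Sum>i\<in>UNIV. norm (x$i))"

lemma l1_norm_nonneg: "0 \<le> l1_norm x"
  unfolding l1_norm_def by (simp add: sum_nonneg)

lemma l1_norm_pos:
  assumes "x \<noteq> 0"
  shows "0 < l1_norm x"
proof -
  obtain i where "x$i \<noteq> 0"
    using assms by (auto simp: vec_eq_iff)
  then have "0 < norm (x$i)" by simp
  also have "\<dots> \<le> l1_norm x"
    unfolding l1_norm_def by (rule member_le_sum) auto
  finally show ?thesis .
qed

lemma l1_norm_triangle: "l1_norm (x + y) \<le> l1_norm x + l1_norm y"
  unfolding l1_norm_def sum.distrib[symmetric] by (intro sum_mono) (simp add: norm_triangle_ineq)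

lemma l1_norm_triangle_diff: "l1_norm (x - y) \<le> l1_norm x + l1_norm y"
  unfolding l1_norm_def sum.distrib[symmetric] by (intro sum_mono) (simp add: norm_triangle_ineq4)

lemma norm_le_l1_norm: "norm x \<le> l1_norm x"
  unfolding l1_norm_def norm_vec_def by (rule L2_set_le_sum) simp

lemma l1_normalized_in_Omega:
  assumes "x \<noteq> 0"
  shows "(\<chi> i. norm (x$i) / l1_norm x) \<in> Omega"
  using l1_norm_pos[OF assms] by (simp add: Omega_iff sum_divide_distrib[symmetric] l1_norm_def)

lemma psi_norm_eq:
  "x \<noteq> 0 \<Longrightarrow> psi_norm f x = l1_norm x * f (\<chi> i. norm (x$i) / l1_norm x)"
  by (simp add: psi_norm_def l1_norm_def Let_def)

lemma psi_norm_zero [simp]: "psi_norm f 0 = 0"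
  by (simp add: psi_norm_def)

lemma psi_norm_mono:
  assumes "\<And>t. t \<in> Omega \<Longrightarrow> f t \<le> g t"
  shows "psi_norm f x \<le> psi_norm g x"
proof (cases "x = 0")
  case False
  then show ?thesis
    using assms[OF l1_normalized_in_Omega[OF False]] l1_norm_nonneg[of x]
    by (simp add: psi_norm_eq mult_left_mono)
qed simp

lemma psi_norm_cmult: "psi_norm (\<lambda>t. c * f t) x = c * psi_norm f x"
  by (simp add: psi_norm_def Let_def)

lemma psi_norm_const: "psi_norm (\<lambda>t. c) x = c * l1_norm x"
  by (simp add: psi_norm_def l1_norm_def Let_def)

lemma psi_norm_scaleR: "psi_norm f (r *\<^sub>R x) = \<bar>r\<bar> * psi_norm f x"
proof (cases "r = 0 \<or> x = 0")
  case False
  have l1: "l1_norm (r *\<^sub>R x) = \<bar>r\<bar> * l1_norm x"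
    by (simp add: l1_norm_def sum_distrib_left)
  then have "(\<chi> i. norm ((r *\<^sub>R x)$i) / l1_norm (r *\<^sub>R x)) = (\<chi> i. norm (x$i) / l1_norm x)"
    using False by (simp add: vec_eq_iff)
  then show ?thesis
    using False l1 by (simp add: psi_norm_eq)
qed auto

lemma PsiClass_psi_norm_pos:
  assumes "psi \<in> PsiClass" and "x \<noteq> 0"
  shows "0 < psi_norm psi x"
  using PsiClass_pos[OF assms(1) l1_normalized_in_Omega[OF assms(2)]] l1_norm_pos[OF assms(2)]
  by (simp add: psi_norm_eq assms(2))

lemma PsiClass_psi_norm_nonneg:
  assumes "psi \<in> PsiClass"
  shows "0 \<le> psi_norm psi x"
  using PsiClass_psi_norm_pos[OF assms, of x] by (cases "x = 0") simp_all

lemma PsiClass_psi_norm_equiv_l1_norm: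
  fixes psi :: "real^'n \<Rightarrow> real"
  assumes "psi \<in> PsiClass"
  obtains c C where "0 < c"
    "\<And>x :: ('a::real_normed_vector)^'n. c * l1_norm x \<le> psi_norm psi x \<and> psi_norm psi x \<le> C * l1_norm x"
proof -
  obtain c C where "0 < c" and bounds: "\<And>t. t \<in> Omega \<Longrightarrow> c \<le> psi t \<and> psi t \<le> C"
    using PsiClass_bounds[OF assms] by blast
  have "c * l1_norm x \<le> psi_norm psi x \<and> psi_norm psi x \<le> C * l1_norm x" for x :: "'a^'n"
    using psi_norm_mono[of "\<lambda>t. c" psi x] psi_norm_mono[of psi "\<lambda>t. C" x] bounds
    by (simp add: psi_norm_const)
  then show ?thesis
    using that \<open>0 < c\<close> by blast
qed

lemma bdd_above_dual_psi_norm_set: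
  fixes F :: "(('a::real_normed_vector)^'n) \<Rightarrow>\<^sub>L real"
  assumes "psi \<in> PsiClass"
  shows "bdd_above {\<bar>blinfun_apply F x\<bar> | x. psi_norm psi x \<le> 1}"
proof -
  obtain c C where "0 < c"
    and equiv: "\<And>x :: 'a^'n. c * l1_norm x \<le> psi_norm psi x \<and> psi_norm psi x \<le> C * l1_norm x"
    using PsiClass_psi_norm_equiv_l1_norm[OF assms] by blast
  have "\<bar>blinfun_apply F x\<bar> \<le> norm F * (1 / c)" if "psi_norm psi x \<le> 1" for x
  proof -
    have "c * norm x \<le> c * l1_norm x"
      using norm_le_l1_norm[of x] \<open>0 < c\<close> by (simp add: mult_le_cancel_left_pos)
    also have "\<dots> \<le> 1"
      using order_trans[OF conjunct1[OF equiv] that] .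
    finally have "norm x \<le> 1 / c"
      using \<open>0 < c\<close> by (simp add: pos_le_divide_eq mult.commute)
    then have "norm F * norm x \<le> norm F * (1 / c)"
      by (rule mult_left_mono) simp
    then show ?thesis
      using norm_blinfun[of F x] by simp
  qed
  then show ?thesis
    by (intro bdd_aboveI[where M = "norm F * (1 / c)"]) blast
qed

lemma abs_le_dual_psi_norm:
  fixes F :: "(('a::real_normed_vector)^'n) \<Rightarrow>\<^sub>L real"
  assumes "psi \<in> PsiClass" and "psi_norm psi x \<le> 1"
  shows "\<bar>blinfun_apply F x\<bar> \<le> dual_psi_norm psi F"
  unfolding dual_psi_norm_def
proof (rule cSup_upper)
  show "\<bar>blinfun_apply F x\<bar> \<in> {\<bar>blinfun_apply F x\<bar> | x. psi_norm psi x \<le> 1}"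
    using assms(2) by blast
qed (rule bdd_above_dual_psi_norm_set[OF assms(1)])

lemma dual_psi_norm_le:
  fixes F :: "(('a::real_normed_vector)^'n) \<Rightarrow>\<^sub>L real"
  assumes "\<And>x. psi_norm psi x \<le> 1 \<Longrightarrow> \<bar>blinfun_apply F x\<bar> \<le> B"
  shows "dual_psi_norm psi F \<le> B"
  unfolding dual_psi_norm_def
proof (rule cSup_least)
  have "psi_norm psi 0 \<le> 1"
    by simp
  then show "{\<bar>blinfun_apply F x\<bar> | x. psi_norm psi x \<le> 1} \<noteq> {}"
    by blast
qed (use assms in blast)

lemma dual_psi_norm_nonneg:
  fixes F :: "(('a::real_normed_vector)^'n) \<Rightarrow>\<^sub>L real"
  assumes "psi \<in> PsiClass"
  shows "0 \<le> dual_psi_norm psi F"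
  using abs_le_dual_psi_norm[OF assms, of 0 F] by simp

lemma dual_psi_norm_triangle:
  fixes F G :: "(('a::real_normed_vector)^'n) \<Rightarrow>\<^sub>L real"
  assumes "psi \<in> PsiClass"
  shows "dual_psi_norm psi (F + G) \<le> dual_psi_norm psi F + dual_psi_norm psi G"
proof (rule dual_psi_norm_le)
  fix x :: "'a^'n" assume x: "psi_norm psi x \<le> 1"
  have "\<bar>blinfun_apply (F + G) x\<bar> \<le> \<bar>blinfun_apply F x\<bar> + \<bar>blinfun_apply G x\<bar>"
    by (simp add: blinfun.add_left abs_triangle_ineq)
  then show "\<bar>blinfun_apply (F + G) x\<bar> \<le> dual_psi_norm psi F + dual_psi_norm psi G"
    using abs_le_dual_psi_norm[OF assms x, of F] abs_le_dual_psi_norm[OF assms x, of G] by linarith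
qed

lemma dual_psi_norm_triangle_diff:
  fixes F G :: "(('a::real_normed_vector)^'n) \<Rightarrow>\<^sub>L real"
  assumes "psi \<in> PsiClass"
  shows "dual_psi_norm psi (F - G) \<le> dual_psi_norm psi F + dual_psi_norm psi G"
proof (rule dual_psi_norm_le)
  fix x :: "'a^'n" assume x: "psi_norm psi x \<le> 1"
  have "\<bar>blinfun_apply (F - G) x\<bar> \<le> \<bar>blinfun_apply F x\<bar> + \<bar>blinfun_apply G x\<bar>"
    by (simp add: blinfun.diff_left abs_triangle_ineq4)
  then show "\<bar>blinfun_apply (F - G) x\<bar> \<le> dual_psi_norm psi F + dual_psi_norm psi G"
    using abs_le_dual_psi_norm[OF assms x, of F] abs_le_dual_psi_norm[OF assms x, of G] by linarith
qed

lemma dual_psi_norm_compare: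
  fixes F :: "(('a::real_normed_vector)^'n) \<Rightarrow>\<^sub>L real"
  assumes "psi \<in> PsiClass" and "0 < k" and "\<And>t. t \<in> Omega \<Longrightarrow> psi t \<le> k * phi t"
  shows "dual_psi_norm phi F \<le> k * dual_psi_norm psi F"
proof (rule dual_psi_norm_le)
  fix x :: "'a^'n" assume x: "psi_norm phi x \<le> 1"
  have "psi_norm psi x \<le> psi_norm (\<lambda>t. k * phi t) x"
    using assms(3) by (rule psi_norm_mono)
  also have "\<dots> \<le> k"
    using x \<open>0 < k\<close> by (simp add: psi_norm_cmult)
  finally have "psi_norm psi ((1 / k) *\<^sub>R x) \<le> 1"
    using \<open>0 < k\<close> by (simp add: psi_norm_scaleR)
  then have "\<bar>blinfun_apply F ((1 / k) *\<^sub>R x)\<bar> \<le> dual_psi_norm psi F"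
    by (rule abs_le_dual_psi_norm[OF assms(1)])
  then show "\<bar>blinfun_apply F x\<bar> \<le> k * dual_psi_norm psi F"
    using \<open>0 < k\<close> by (simp add: blinfun.scaleR_right abs_mult pos_divide_le_eq mult.commute)
qed

lemma dual_psi_norm_pos:
  fixes F :: "(('a::real_normed_vector)^'n) \<Rightarrow>\<^sub>L real"
  assumes "psi \<in> PsiClass" and "F \<noteq> 0"
  shows "0 < dual_psi_norm psi F"
proof -
  obtain x where "blinfun_apply F x \<noteq> 0"
    using assms(2) by (metis blinfun_eqI zero_blinfun.rep_eq)
  then have "x \<noteq> 0" by auto
  then have p: "0 < psi_norm psi x"
    by (rule PsiClass_psi_norm_pos[OF assms(1)])
  then have "psi_norm psi ((1 / psi_norm psi x) *\<^sub>R x) \<le> 1"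
    by (simp add: psi_norm_scaleR)
  then have "\<bar>blinfun_apply F ((1 / psi_norm psi x) *\<^sub>R x)\<bar> \<le> dual_psi_norm psi F"
    by (rule abs_le_dual_psi_norm[OF assms(1)])
  moreover have "0 < \<bar>blinfun_apply F ((1 / psi_norm psi x) *\<^sub>R x)\<bar>"
    using p \<open>blinfun_apply F x \<noteq> 0\<close> by (simp add: blinfun.scaleR_right)
  ultimately show ?thesis by linarith
qed

section \<open>Von Neumann--Jordan constants of equivalent norms\<close>

definition nj_quotients :: "('v::real_vector \<Rightarrow> real) \<Rightarrow> real set" where
  "nj_quotients N = {((N (x + y))^2 + (N (x - y))^2) / (2 * ((N x)^2 + (N y)^2)) | x y. N x + N y > 0}"

lemma cNJ_eq_Sup_nj_quotients: "cNJ N = Sup (nj_quotients N)"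
  by (simp add: cNJ_def nj_quotients_def)

lemma nj_quotients_nonempty:
  assumes "0 < N x"
  shows "nj_quotients N \<noteq> {}"
  using assms unfolding nj_quotients_def by (auto intro!: exI[of _ x])

lemma nj_quotients_le_2:
  fixes N :: "'v::real_vector \<Rightarrow> real"
  assumes nonneg: "\<And>x. 0 \<le> N x"
    and triangle: "\<And>x y. N (x + y) \<le> N x + N y" and triangle_diff: "\<And>x y. N (x - y) \<le> N x + N y"
    and "q \<in> nj_quotients N"
  shows "q \<le> 2"
proof -
  obtain x y where q: "q = ((N (x + y))^2 + (N (x - y))^2) / (2 * ((N x)^2 + (N y)^2))"
    and pos: "N x + N y > 0"
    using assms(4) unfolding nj_quotients_def by blast
  have "(N (x + y))^2 \<le> (N x + N y)^2" "(N (x - y))^2 \<le> (N x + N y)^2"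
    by (rule power_mono[OF triangle nonneg] power_mono[OF triangle_diff nonneg])+
  moreover have "(N x + N y)^2 \<le> 2 * ((N x)^2 + (N y)^2)"
    using sum_squares_ge_zero[of "N x - N y" 0] by (simp add: power2_eq_square algebra_simps)
  moreover have "0 < (N x)^2 + (N y)^2"
    using pos nonneg[of x] nonneg[of y] by (auto simp: sum_power2_gt_zero_iff)
  ultimately show ?thesis
    unfolding q by (simp add: divide_le_eq)
qed

lemma nj_quotient_le_compare:
  fixes N\<^sub>1 N\<^sub>2 :: "'v::real_vector \<Rightarrow> real"
  assumes lower: "\<And>v. a * N\<^sub>2 v \<le> N\<^sub>1 v" and upper: "\<And>v. N\<^sub>1 v \<le> b * N\<^sub>2 v"
    and "0 < a" and nonneg: "\<And>v. 0 \<le> N\<^sub>2 v"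
    and "q \<in> nj_quotients N\<^sub>1"
  obtains q\<^sub>2 where "q\<^sub>2 \<in> nj_quotients N\<^sub>2" "q \<le> (b / a)^2 * q\<^sub>2"
proof -
  obtain x y where q: "q = ((N\<^sub>1 (x + y))^2 + (N\<^sub>1 (x - y))^2) / (2 * ((N\<^sub>1 x)^2 + (N\<^sub>1 y)^2))"
    and pos: "N\<^sub>1 x + N\<^sub>1 y > 0"
    using assms(5) unfolding nj_quotients_def by blast
  define q\<^sub>2 where "q\<^sub>2 = ((N\<^sub>2 (x + y))^2 + (N\<^sub>2 (x - y))^2) / (2 * ((N\<^sub>2 x)^2 + (N\<^sub>2 y)^2))"
  have N\<^sub>1_nonneg: "0 \<le> N\<^sub>1 v" for v
    using order_trans[OF mult_nonneg_nonneg lower] nonneg \<open>0 < a\<close> by simp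
  have sq_upper: "(N\<^sub>1 v)^2 \<le> b^2 * (N\<^sub>2 v)^2" for v
    using power_mono[OF upper N\<^sub>1_nonneg, of v 2] by (simp add: power_mult_distrib)
  have sq_lower: "a^2 * (N\<^sub>2 v)^2 \<le> (N\<^sub>1 v)^2" for v
    using power_mono[OF lower, of v 2] nonneg[of v] \<open>0 < a\<close> by (simp add: power_mult_distrib)
  have pos\<^sub>2: "N\<^sub>2 x + N\<^sub>2 y > 0"
  proof (rule ccontr)
    assume "\<not> N\<^sub>2 x + N\<^sub>2 y > 0"
    then have "N\<^sub>2 x = 0" "N\<^sub>2 y = 0"
      using nonneg[of x] nonneg[of y] by linarith+
    then show False
      using pos upper[of x] upper[of y] by simp
  qed
  then have "0 < (N\<^sub>2 x)^2 + (N\<^sub>2 y)^2"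
    using nonneg[of x] nonneg[of y] by (auto simp: sum_power2_gt_zero_iff)
  then have den: "0 < a^2 * (2 * ((N\<^sub>2 x)^2 + (N\<^sub>2 y)^2))"
    using \<open>0 < a\<close> by simp
  have num: "(N\<^sub>1 (x + y))^2 + (N\<^sub>1 (x - y))^2 \<le> b^2 * ((N\<^sub>2 (x + y))^2 + (N\<^sub>2 (x - y))^2)"
    using sq_upper[of "x + y"] sq_upper[of "x - y"] by (simp add: distrib_left)
  have "a^2 * (2 * ((N\<^sub>2 x)^2 + (N\<^sub>2 y)^2)) = 2 * (a^2 * (N\<^sub>2 x)^2 + a^2 * (N\<^sub>2 y)^2)"
    by (simp add: algebra_simps)
  also have "\<dots> \<le> 2 * ((N\<^sub>1 x)^2 + (N\<^sub>1 y)^2)"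
    using add_mono[OF sq_lower[of x] sq_lower[of y]] by simp
  finally have "a^2 * (2 * ((N\<^sub>2 x)^2 + (N\<^sub>2 y)^2)) \<le> 2 * ((N\<^sub>1 x)^2 + (N\<^sub>1 y)^2)" .
  then have "q \<le> (b^2 * ((N\<^sub>2 (x + y))^2 + (N\<^sub>2 (x - y))^2)) / (a^2 * (2 * ((N\<^sub>2 x)^2 + (N\<^sub>2 y)^2)))"
    unfolding q using num den by (intro frac_le) simp_all
  also have "\<dots> = (b / a)^2 * q\<^sub>2"
    by (simp add: q\<^sub>2_def power_divide)
  finally have "q \<le> (b / a)^2 * q\<^sub>2" .
  moreover have "q\<^sub>2 \<in> nj_quotients N\<^sub>2"
    unfolding q\<^sub>2_def nj_quotients_def using pos\<^sub>2 by blast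
  ultimately show ?thesis using that by blast
qed

lemma bdd_above_nj_quotients_compare:
  fixes N\<^sub>1 N\<^sub>2 :: "'v::real_vector \<Rightarrow> real"
  assumes "\<And>v. a * N\<^sub>2 v \<le> N\<^sub>1 v" "\<And>v. N\<^sub>1 v \<le> b * N\<^sub>2 v" "0 < a" "\<And>v. 0 \<le> N\<^sub>2 v"
    and "bdd_above (nj_quotients N\<^sub>2)"
  shows "bdd_above (nj_quotients N\<^sub>1)"
proof -
  obtain B where B: "\<And>q. q \<in> nj_quotients N\<^sub>2 \<Longrightarrow> q \<le> B"
    using assms(5) by (auto simp: bdd_above_def)
  have "q \<le> (b / a)^2 * B" if q: "q \<in> nj_quotients N\<^sub>1" for q
  proof -
    obtain q\<^sub>2 where "q\<^sub>2 \<in> nj_quotients N\<^sub>2" "q \<le> (b / a)^2 * q\<^sub>2"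
      using nj_quotient_le_compare[where a = a and b = b and N\<^sub>1 = N\<^sub>1 and N\<^sub>2 = N\<^sub>2, OF assms(1-4) q] by blast
    then show ?thesis
      using B mult_left_mono[of q\<^sub>2 B "(b / a)^2"] by fastforce
  qed
  then show ?thesis
    by (rule bdd_aboveI)
qed

lemma cNJ_le_compare:
  fixes N\<^sub>1 N\<^sub>2 :: "'v::real_vector \<Rightarrow> real"
  assumes "\<And>v. a * N\<^sub>2 v \<le> N\<^sub>1 v" "\<And>v. N\<^sub>1 v \<le> b * N\<^sub>2 v" "0 < a" "\<And>v. 0 \<le> N\<^sub>2 v"
    and "bdd_above (nj_quotients N\<^sub>2)" and "nj_quotients N\<^sub>1 \<noteq> {}"
  shows "cNJ N\<^sub>1 \<le> (b / a)^2 * cNJ N\<^sub>2"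
  unfolding cNJ_eq_Sup_nj_quotients
proof (rule cSup_least[OF assms(6)])
  fix q assume "q \<in> nj_quotients N\<^sub>1"
  then obtain q\<^sub>2 where "q\<^sub>2 \<in> nj_quotients N\<^sub>2" "q \<le> (b / a)^2 * q\<^sub>2"
    using nj_quotient_le_compare[where a = a and b = b and N\<^sub>1 = N\<^sub>1 and N\<^sub>2 = N\<^sub>2, OF assms(1-4)] by blast
  then show "q \<le> (b / a)^2 * Sup (nj_quotients N\<^sub>2)"
    using cSup_upper[OF _ assms(5)] mult_left_mono[of q\<^sub>2 _ "(b / a)^2"] by fastforce
qed

lemma cNJ_compare:
  fixes N\<^sub>1 N\<^sub>2 :: "'v::real_vector \<Rightarrow> real"
  assumes lower: "\<And>v. a * N\<^sub>2 v \<le> N\<^sub>1 v" and upper: "\<And>v. N\<^sub>1 v \<le> b * N\<^sub>2 v"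
    and "0 < a" and nonneg: "\<And>v. 0 \<le> N\<^sub>2 v"
    and bdd: "bdd_above (nj_quotients N\<^sub>2)" and "0 < N\<^sub>2 v\<^sub>0"
  shows "(a / b)^2 * cNJ N\<^sub>2 \<le> cNJ N\<^sub>1" and "cNJ N\<^sub>1 \<le> (b / a)^2 * cNJ N\<^sub>2"
proof -
  have "0 < N\<^sub>1 v\<^sub>0"
    using lower[of v\<^sub>0] mult_pos_pos[OF \<open>0 < a\<close> \<open>0 < N\<^sub>2 v\<^sub>0\<close>] by linarith
  have "a * N\<^sub>2 v\<^sub>0 \<le> b * N\<^sub>2 v\<^sub>0"
    using lower upper order_trans by blast
  then have "0 < b"
    using \<open>0 < a\<close> \<open>0 < N\<^sub>2 v\<^sub>0\<close> by (simp add: mult_le_cancel_right)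
  show "cNJ N\<^sub>1 \<le> (b / a)^2 * cNJ N\<^sub>2"
    using cNJ_le_compare[where a = a and b = b and N\<^sub>1 = N\<^sub>1 and N\<^sub>2 = N\<^sub>2,
        OF assms(1-5) nj_quotients_nonempty[of N\<^sub>1, OF \<open>0 < N\<^sub>1 v\<^sub>0\<close>]] .
  have lower': "(1 / b) * N\<^sub>1 v \<le> N\<^sub>2 v" and upper': "N\<^sub>2 v \<le> (1 / a) * N\<^sub>1 v" for v
    using lower[of v] upper[of v] \<open>0 < a\<close> \<open>0 < b\<close> by (simp_all add: field_simps)
  have "\<And>v. 0 \<le> N\<^sub>1 v"
    using lower nonneg \<open>0 < a\<close> by (meson mult_nonneg_nonneg less_imp_le order_trans)
  then have "cNJ N\<^sub>2 \<le> ((1 / a) / (1 / b))^2 * cNJ N\<^sub>1"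
    using cNJ_le_compare[where N\<^sub>1 = N\<^sub>2 and N\<^sub>2 = N\<^sub>1, OF lower' upper'] \<open>0 < b\<close>
      nj_quotients_nonempty[of N\<^sub>2, OF \<open>0 < N\<^sub>2 v\<^sub>0\<close>]
      bdd_above_nj_quotients_compare[where a = a and b = b and N\<^sub>1 = N\<^sub>1 and N\<^sub>2 = N\<^sub>2, OF assms(1-5)] by simp
  then have "(a / b)^2 * cNJ N\<^sub>2 \<le> (a / b)^2 * ((b / a)^2 * cNJ N\<^sub>1)"
    by (intro mult_left_mono) simp_all
  also have "\<dots> = cNJ N\<^sub>1"
    using \<open>0 < a\<close> \<open>0 < b\<close> by (simp add: power_divide)
  finally show "(a / b)^2 * cNJ N\<^sub>2 \<le> cNJ N\<^sub>1" .
qed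

lemma PsiClass_bdd_above_nj_quotients:
  assumes "psi \<in> PsiClass"
  shows "bdd_above (nj_quotients (psi_norm psi :: ('a::real_normed_vector)^'n \<Rightarrow> real))"
proof -
  obtain c C where "0 < c" and equiv: "\<And>x :: 'a^'n. c * l1_norm x \<le> psi_norm psi x \<and> psi_norm psi x \<le> C * l1_norm x"
    using PsiClass_psi_norm_equiv_l1_norm[OF assms] by blast
  have "bdd_above (nj_quotients (l1_norm :: 'a^'n \<Rightarrow> real))"
    using nj_quotients_le_2[OF l1_norm_nonneg l1_norm_triangle l1_norm_triangle_diff]
    by (rule bdd_aboveI)
  then show ?thesis
    by (rule bdd_above_nj_quotients_compare[where N\<^sub>1 = "psi_norm psi" and N\<^sub>2 = l1_norm,
          OF conjunct1[OF equiv] conjunct2[OF equiv] \<open>0 < c\<close> l1_norm_nonneg])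
qed

lemma cNJ_psi_norm_compare:
  fixes psi phi :: "real^'n \<Rightarrow> real"
  assumes "\<exists>x::'a::real_normed_vector. x \<noteq> 0" and psi: "psi \<in> PsiClass" and phi: "phi \<in> PsiClass"
    and "0 < a" and bounds: "\<And>t. t \<in> Omega \<Longrightarrow> a * phi t \<le> psi t \<and> psi t \<le> b * phi t"
  shows "(a / b)^2 * cNJ (psi_norm phi :: 'a^'n \<Rightarrow> real) \<le> cNJ (psi_norm psi :: 'a^'n \<Rightarrow> real)"
    and "cNJ (psi_norm psi :: 'a^'n \<Rightarrow> real) \<le> (b / a)^2 * cNJ (psi_norm phi :: 'a^'n \<Rightarrow> real)"
proof -
  obtain v :: 'a where "v \<noteq> 0"
    using assms(1) by blast
  then have pos: "0 < psi_norm phi (vec v :: 'a^'n)"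
    by (intro PsiClass_psi_norm_pos[OF phi]) (simp add: vec_eq_iff)
  have lower: "a * psi_norm phi x \<le> psi_norm psi x" and upper: "psi_norm psi x \<le> b * psi_norm phi x"
    for x :: "'a^'n"
    using psi_norm_mono[of "\<lambda>t. a * phi t" psi x] psi_norm_mono[of psi "\<lambda>t. b * phi t" x] bounds
    by (simp_all add: psi_norm_cmult)
  note compare = cNJ_compare[where N\<^sub>1 = "psi_norm psi" and N\<^sub>2 = "psi_norm phi",
      OF lower upper \<open>0 < a\<close> PsiClass_psi_norm_nonneg[OF phi] PsiClass_bdd_above_nj_quotients[OF phi] pos]
  show "(a / b)^2 * cNJ (psi_norm phi :: 'a^'n \<Rightarrow> real) \<le> cNJ (psi_norm psi :: 'a^'n \<Rightarrow> real)"
    by (rule compare(1))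
  show "cNJ (psi_norm psi :: 'a^'n \<Rightarrow> real) \<le> (b / a)^2 * cNJ (psi_norm phi :: 'a^'n \<Rightarrow> real)"
    by (rule compare(2))
qed

lemma cNJ_dual_psi_norm_compare:
  fixes psi phi :: "real^'n \<Rightarrow> real"
  assumes "\<exists>x::'a::real_normed_vector. x \<noteq> 0" and psi: "psi \<in> PsiClass" and phi: "phi \<in> PsiClass"
    and "0 < a" and bounds: "\<And>t. t \<in> Omega \<Longrightarrow> a * phi t \<le> psi t \<and> psi t \<le> b * phi t"
  shows "(a / b)^2 * cNJ (dual_psi_norm phi :: (('a^'n) \<Rightarrow>\<^sub>L real) \<Rightarrow> real)
      \<le> cNJ (dual_psi_norm psi :: (('a^'n) \<Rightarrow>\<^sub>L real) \<Rightarrow> real)"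
    and "cNJ (dual_psi_norm psi :: (('a^'n) \<Rightarrow>\<^sub>L real) \<Rightarrow> real)
      \<le> (b / a)^2 * cNJ (dual_psi_norm phi :: (('a^'n) \<Rightarrow>\<^sub>L real) \<Rightarrow> real)"
proof -
  have "a * phi t \<le> b * phi t" if "t \<in> Omega" for t
    using bounds[OF that] by linarith
  then have "a \<le> b"
    using PsiClass_pos[OF phi axis_in_Omega] axis_in_Omega by (metis mult_le_cancel_right_pos)
  then have "0 < b" using \<open>0 < a\<close> by linarith
  obtain F\<^sub>0 :: "('a^'n) \<Rightarrow>\<^sub>L real" where "F\<^sub>0 \<noteq> 0"
    using exists_nonzero_blinfun_vec[OF assms(1)] by blast
  have lower: "(1 / b) * dual_psi_norm phi F \<le> dual_psi_norm psi F"
    and upper: "dual_psi_norm psi F \<le> (1 / a) * dual_psi_norm phi F" for F :: "('a^'n) \<Rightarrow>\<^sub>L real"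
  proof -
    have "dual_psi_norm phi F \<le> b * dual_psi_norm psi F"
      using bounds by (intro dual_psi_norm_compare[OF psi \<open>0 < b\<close>]) blast
    then show "(1 / b) * dual_psi_norm phi F \<le> dual_psi_norm psi F"
      using \<open>0 < b\<close> by (simp add: field_simps)
    show "dual_psi_norm psi F \<le> (1 / a) * dual_psi_norm phi F"
      using bounds \<open>0 < a\<close> by (intro dual_psi_norm_compare[OF phi]) (simp_all add: field_simps)
  qed
  have "bdd_above (nj_quotients (dual_psi_norm phi :: (('a^'n) \<Rightarrow>\<^sub>L real) \<Rightarrow> real))"
    using nj_quotients_le_2[OF dual_psi_norm_nonneg dual_psi_norm_triangle dual_psi_norm_triangle_diff, OF phi phi phi]
    by (rule bdd_aboveI)
  note compare = cNJ_compare[where N\<^sub>1 = "dual_psi_norm psi" and N\<^sub>2 = "dual_psi_norm phi",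
      OF lower upper _ dual_psi_norm_nonneg[OF phi] this dual_psi_norm_pos[OF phi \<open>F\<^sub>0 \<noteq> 0\<close>]]
  show "(a / b)^2 * cNJ (dual_psi_norm phi :: (('a^'n) \<Rightarrow>\<^sub>L real) \<Rightarrow> real)
      \<le> cNJ (dual_psi_norm psi :: (('a^'n) \<Rightarrow>\<^sub>L real) \<Rightarrow> real)"
    using compare(1) \<open>0 < a\<close> \<open>0 < b\<close> by simp
  show "cNJ (dual_psi_norm psi :: (('a^'n) \<Rightarrow>\<^sub>L real) \<Rightarrow> real)
      \<le> (b / a)^2 * cNJ (dual_psi_norm phi :: (('a^'n) \<Rightarrow>\<^sub>L real) \<Rightarrow> real)"
    using compare(2) \<open>0 < a\<close> \<open>0 < b\<close> by simp
qed

theorem theorem6p2: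
  fixes psi phi :: "real^'n \<Rightarrow> real"
  assumes "CARD('n) \<ge> 2"
    and "\<exists>x::'a::real_normed_vector. x \<noteq> 0"
    and "psi \<in> PsiClass" and "phi \<in> PsiClass"
  defines "m \<equiv> Inf ((\<lambda>t. psi t / phi t) ` Omega)"
    and "M \<equiv> Sup ((\<lambda>t. psi t / phi t) ` Omega)"
  shows "(m^2 / M^2 * cNJ (psi_norm phi :: 'a^'n \<Rightarrow> real) \<le> cNJ (psi_norm psi :: 'a^'n \<Rightarrow> real)
         \<and> cNJ (psi_norm psi :: 'a^'n \<Rightarrow> real) \<le> M^2 / m^2 * cNJ (psi_norm phi :: 'a^'n \<Rightarrow> real))
    \<and> (m^2 / M^2 * cNJ (dual_psi_norm phi :: (('a^'n) \<Rightarrow>\<^sub>L real) \<Rightarrow> real)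
           \<le> cNJ (dual_psi_norm psi :: (('a^'n) \<Rightarrow>\<^sub>L real) \<Rightarrow> real)
         \<and> cNJ (dual_psi_norm psi :: (('a^'n) \<Rightarrow>\<^sub>L real) \<Rightarrow> real)
           \<le> M^2 / m^2 * cNJ (dual_psi_norm phi :: (('a^'n) \<Rightarrow>\<^sub>L real) \<Rightarrow> real))"
proof -
  have "0 < m" and bounds: "\<And>t. t \<in> Omega \<Longrightarrow> m * phi t \<le> psi t \<and> psi t \<le> M * phi t"
    using PsiClass_ratio_bounds[OF assms(3,4)] unfolding m_def M_def by blast+
  note norms = cNJ_psi_norm_compare[OF assms(2-4) \<open>0 < m\<close> bounds]
    and duals = cNJ_dual_psi_norm_compare[OF assms(2-4) \<open>0 < m\<close> bounds]
  show ?thesis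
    using norms duals by (simp add: power_divide)
qed

end
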